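(* Let $\beta,\theta,\gamma>0$ be such that the Perron root $\lambda(\beta,\theta,\gamma)$ equals $0$, and let $h$ be the associated eigenfunction. Then $h$ is subadditive: $h(m+n)\le h(m)+h(n)$ for all $m,n\in\mathbb{N}_+$.
   Context: For parameters $\beta,\theta,\gamma>0$, $\mathcal{L}f(n)=\beta n(f(n+1)-f(n))-\theta nf(n)+\sum_{j=1}^{n-1}\frac{\gamma n}{j(j+1)}(f(j)+f(n-j)-f(n))$; it generates the first moment semigroup $(M_t)$ of the active cluster-size process of the GFI process ($M_tf(n)$ is the expected sum of $f(\text{size})$ over active clusters at time $t$ when starting from one active cluster, a uniform random recursive tree of size $n$; a cluster of size $n$ is isolated at rate $\theta n$, grows at rate $\beta n$, splits into sizes $n-j,j$ at rate $\gamma n/(j(j+1))$). The Perron root $\lambda$ and eigenfunction $h$ are the unique real number and positive function $h:\mathbb{N}_+\to(0,\infty)$, bounded above and below by positive constants, with $M_th=e^{\lambda t}h$ for all $t$, normalized by $\sum_n\pi(n)h(n)=1$ where $\pi$ is the probability vector with $\pi M_t=e^{\lambda t}\pi$. *)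

theory Defs
  imports "HOL-Analysis.Analysis"
begin

text \<open>The generator L of the first moment semigroup, acting on functions on the
  positive integers (the value at 0 is never used).\<close>
definition gfi_gen :: "real \<Rightarrow> real \<Rightarrow> real \<Rightarrow> (nat \<Rightarrow> real) \<Rightarrow> nat \<Rightarrow> real" where
  "gfi_gen \<beta> \<theta> \<gamma> f n =
     \<beta> * real n * (f (n + 1) - f n) - \<theta> * real n * f n
     + (\<Sum>j = 1..n - 1. \<gamma> * real n / (real j * (real j + 1)) * (f j + f (n - j) - f n))"

definition gen_entry :: "real \<Rightarrow> real \<Rightarrow> real \<Rightarrow> nat \<Rightarrow> nat \<Rightarrow> real" where
  "gen_entry \<beta> \<theta> \<gamma> n k = gfi_gen \<beta> \<theta> \<gamma> (\<lambda>m. if m = k then 1 else 0) n"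

text \<open>Mild (integral) form of the backward Kolmogorov equation for the kernel
  M_t(n,m):  M_t(n,m) = delta_{nm} e^{L(n,n) t}
     + int_0^t e^{L(n,n) s} sum_{k >= 1, k \<noteq> n} L(n,k) M_{t-s}(k,m) ds.\<close>
definition mild_op ::
  "real \<Rightarrow> real \<Rightarrow> real \<Rightarrow> (real \<Rightarrow> nat \<Rightarrow> nat \<Rightarrow> ennreal) \<Rightarrow> (real \<Rightarrow> nat \<Rightarrow> nat \<Rightarrow> ennreal)" where
  "mild_op \<beta> \<theta> \<gamma> K = (\<lambda>t n m.
     ennreal (if n = m then exp (gen_entry \<beta> \<theta> \<gamma> n n * t) else 0)
     + (\<integral>\<^sup>+ s\<in>{0..t}. ennreal (exp (gen_entry \<beta> \<theta> \<gamma> n n * s)) *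
          (\<Sum>k. if 1 \<le> k \<and> k \<noteq> n then ennreal (gen_entry \<beta> \<theta> \<gamma> n k) * K (t - s) k m else 0)
        \<partial>lborel))"

text \<open>The first moment kernel: the minimal nonnegative solution of the mild backward
  equation (the expected number of active clusters of size m at time t, starting
  from one active cluster of size n).\<close>
definition moment_kernel :: "real \<Rightarrow> real \<Rightarrow> real \<Rightarrow> real \<Rightarrow> nat \<Rightarrow> nat \<Rightarrow> ennreal" where
  "moment_kernel \<beta> \<theta> \<gamma> = lfp (mild_op \<beta> \<theta> \<gamma>)"

definition moment_sg :: "real \<Rightarrow> real \<Rightarrow> real \<Rightarrow> real \<Rightarrow> (nat \<Rightarrow> real) \<Rightarrow> nat \<Rightarrow> ennreal" where
  "moment_sg \<beta> \<theta> \<gamma> t f n =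
     (\<Sum>m. if 1 \<le> m then moment_kernel \<beta> \<theta> \<gamma> t n m * ennreal (f m) else 0)"

definition perron_triple ::
  "real \<Rightarrow> real \<Rightarrow> real \<Rightarrow> real \<Rightarrow> (nat \<Rightarrow> real) \<Rightarrow> (nat \<Rightarrow> real) \<Rightarrow> bool" where
  "perron_triple \<beta> \<theta> \<gamma> lam h \<pi> \<longleftrightarrow>
     (\<forall>n\<ge>1. 0 < h n)
   \<and> (\<exists>c C. 0 < c \<and> (\<forall>n\<ge>1. c \<le> h n \<and> h n \<le> C))
   \<and> (\<forall>t\<ge>0. \<forall>n\<ge>1. moment_sg \<beta> \<theta> \<gamma> t h n = ennreal (exp (lam * t) * h n))
   \<and> (\<forall>n\<ge>1. 0 \<le> \<pi> n)
   \<and> (\<lambda>n. if 1 \<le> n then \<pi> n else 0) sums 1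
   \<and> (\<forall>t\<ge>0. \<forall>m\<ge>1.
        (\<Sum>n. if 1 \<le> n then ennreal (\<pi> n) * moment_kernel \<beta> \<theta> \<gamma> t n m else 0)
          = ennreal (exp (lam * t) * \<pi> m))
   \<and> (\<lambda>n. if 1 \<le> n then \<pi> n * h n else 0) sums 1"

end

theory Submission
  imports Defs
begin

text \<open>The kernel is the Kleene limit of the iterates of the mild equation; these stay measurable,
  which lets one interchange sums and integrals in the mild equation for \<open>M\<^sub>t h\<close>. At \<open>t = 1\<close>
  the invariance \<open>M\<^sub>t h = h\<close> then forces \<open>L h = 0\<close>. Differencing this equation shows that the
  increments \<open>D k = h (k + 1) - h k\<close> (with \<open>h 0 = 0\<close>) are a fixed point of a sup-norm
  contraction that keeps \<open>D 0\<close> and preserves decreasing sequences with nonnegative first term.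
  Iterating it from the constant sequence \<open>D 0\<close> gives decreasing approximants, so \<open>D\<close> is
  decreasing: \<open>h\<close> is concave, and a concave sequence vanishing at \<open>0\<close> is subadditive.\<close>

section \<open>The moment kernel as a Kleene limit\<close>

lemma lfp_eq_SUP_funpow_if_chain_continuous:
  fixes F :: "'a::complete_lattice \<Rightarrow> 'a"
  assumes mono: "mono F" and P_bot: "P bot" and P_F: "\<And>x. P x \<Longrightarrow> P (F x)"
    and cont: "\<And>X. incseq X \<Longrightarrow> (\<And>i. P (X i)) \<Longrightarrow> F (SUP i. X i) = (SUP i. F (X i))"
  shows "lfp F = (SUP i. (F ^^ i) bot)"
proof (rule antisym)
  have P_iter: "P ((F ^^ i) bot)" for i
    by (induction i) (simp_all add: P_bot P_F)
  have "F (SUP i. (F ^^ i) bot) = (SUP i. (F ^^ Suc i) bot)"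
    using cont[OF mono_funpow[OF mono] P_iter] by simp
  also have "\<dots> \<le> (SUP i. (F ^^ i) bot)"
    by (intro SUP_least SUP_upper) simp
  finally show "lfp F \<le> (SUP i. (F ^^ i) bot)"
    by (rule lfp_lowerbound)
  have "(F ^^ i) bot \<le> lfp F" for i
  proof (induction i)
    case (Suc i)
    then have "F ((F ^^ i) bot) \<le> F (lfp F)"
      by (rule monoD[OF mono])
    then show ?case
      by (simp add: lfp_fixpoint[OF mono])
  qed simp
  then show "(SUP i. (F ^^ i) bot) \<le> lfp F"
    by (rule SUP_least)
qed

lemma mono_mild_op: "mono (mild_op \<beta> \<theta> \<gamma>)"
proof (rule monoI)
  fix K K' :: "real \<Rightarrow> nat \<Rightarrow> nat \<Rightarrow> ennreal"
  assume "K \<le> K'"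
  then have le: "K t k m \<le> K' t k m" for t k m
    by (simp add: le_fun_def)
  show "mild_op \<beta> \<theta> \<gamma> K \<le> mild_op \<beta> \<theta> \<gamma> K'"
    unfolding le_fun_def mild_op_def
    by (intro allI add_left_mono nn_integral_mono mult_right_mono mult_left_mono suminf_le)
       (auto intro!: mult_left_mono le)
qed

definition kernel_measurable :: "(real \<Rightarrow> nat \<Rightarrow> nat \<Rightarrow> ennreal) \<Rightarrow> bool" where
  "kernel_measurable K \<longleftrightarrow> (\<forall>k m. (\<lambda>t. K t k m) \<in> borel_measurable borel)"

lemma kernel_measurable_mild_op:
  assumes "kernel_measurable K"
  shows "kernel_measurable (mild_op \<beta> \<theta> \<gamma> K)"
  unfolding kernel_measurable_def
proof (intro allI)
  fix n m
  have [measurable]: "(\<lambda>t. K t k m) \<in> borel_measurable borel" for k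
    using assms by (simp add: kernel_measurable_def)
  have "(\<lambda>(t, s). ennreal (exp (gen_entry \<beta> \<theta> \<gamma> n n * s)) *
          (\<Sum>k. if 1 \<le> k \<and> k \<noteq> n then ennreal (gen_entry \<beta> \<theta> \<gamma> n k) * K (t - s) k m else 0)
          * (if 0 \<le> s \<and> s \<le> t then 1 else 0)) \<in> borel_measurable (borel \<Otimes>\<^sub>M lborel)"
    by measurable
  then have "(\<lambda>t. \<integral>\<^sup>+ s\<in>{0..t}. ennreal (exp (gen_entry \<beta> \<theta> \<gamma> n n * s)) *
          (\<Sum>k. if 1 \<le> k \<and> k \<noteq> n then ennreal (gen_entry \<beta> \<theta> \<gamma> n k) * K (t - s) k m else 0)
          \<partial>lborel) \<in> borel_measurable borel"
    by (auto dest!: lborel.borel_measurable_nn_integral simp: indicator_def of_bool_def cong: if_cong)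
  then show "(\<lambda>t. mild_op \<beta> \<theta> \<gamma> K t n m) \<in> borel_measurable borel"
    unfolding mild_op_def by measurable
qed

lemma mild_op_SUP:
  assumes inc: "incseq X" and meas: "\<And>i. kernel_measurable (X i)"
  shows "mild_op \<beta> \<theta> \<gamma> (SUP i. X i) = (SUP i. mild_op \<beta> \<theta> \<gamma> (X i))"
proof (intro ext)
  fix t n m
  define F where "F i s = ennreal (exp (gen_entry \<beta> \<theta> \<gamma> n n * s)) *
      (\<Sum>k. if 1 \<le> k \<and> k \<noteq> n then ennreal (gen_entry \<beta> \<theta> \<gamma> n k) * X i (t - s) k m else 0)
      * indicator {0..t} s" for i s
  have X_mono: "X i r k m \<le> X j r k m" if "i \<le> j" for i j r k
    using inc that by (simp add: incseq_def le_fun_def)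
  have "incseq F"
    unfolding incseq_def le_fun_def F_def
    by (auto intro!: mult_right_mono mult_left_mono suminf_le X_mono)
  moreover have "F i \<in> borel_measurable lborel" for i
  proof -
    have [measurable]: "(\<lambda>t. X i t k m) \<in> borel_measurable borel" for k
      using meas by (simp add: kernel_measurable_def)
    show ?thesis unfolding F_def by measurable
  qed
  moreover have pointwise: "ennreal (exp (gen_entry \<beta> \<theta> \<gamma> n n * s)) *
      (\<Sum>k. if 1 \<le> k \<and> k \<noteq> n then ennreal (gen_entry \<beta> \<theta> \<gamma> n k) * (SUP i. X i) (t - s) k m else 0)
      * indicator {0..t} s = (SUP i. F i s)" for s
  proof -
    have "(\<Sum>k. if 1 \<le> k \<and> k \<noteq> n then ennreal (gen_entry \<beta> \<theta> \<gamma> n k) * (SUP i. X i) (t - s) k m else 0)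
        = (\<Sum>k. SUP i. if 1 \<le> k \<and> k \<noteq> n then ennreal (gen_entry \<beta> \<theta> \<gamma> n k) * X i (t - s) k m else 0)"
      by (intro arg_cong[where f = suminf] ext) (auto simp: SUP_mult_left_ennreal image_image)
    also have "\<dots> = (SUP i. \<Sum>k. if 1 \<le> k \<and> k \<noteq> n then ennreal (gen_entry \<beta> \<theta> \<gamma> n k) * X i (t - s) k m else 0)"
      by (rule ennreal_suminf_SUP_eq) (auto simp: incseq_def intro!: mult_left_mono X_mono)
    finally show ?thesis
      by (simp add: F_def SUP_mult_left_ennreal SUP_mult_right_ennreal)
  qed
  ultimately have "(\<integral>\<^sup>+ s. (SUP i. F i s) \<partial>lborel) = (SUP i. integral\<^sup>N lborel (F i))"
    by (simp add: nn_integral_monotone_convergence_SUP)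
  moreover have "mild_op \<beta> \<theta> \<gamma> (SUP i. X i) t n m
      = ennreal (if n = m then exp (gen_entry \<beta> \<theta> \<gamma> n n * t) else 0) + (\<integral>\<^sup>+ s. (SUP i. F i s) \<partial>lborel)"
    unfolding mild_op_def pointwise by simp
  moreover have "mild_op \<beta> \<theta> \<gamma> (X i) t n m
      = ennreal (if n = m then exp (gen_entry \<beta> \<theta> \<gamma> n n * t) else 0) + (\<integral>\<^sup>+ s. F i s \<partial>lborel)" for i
    by (simp add: mild_op_def F_def)
  ultimately show "mild_op \<beta> \<theta> \<gamma> (SUP i. X i) t n m = (SUP i. mild_op \<beta> \<theta> \<gamma> (X i)) t n m"
    by (simp add: ennreal_SUP_add_right image_image)
qed

lemma kernel_measurable_iterates: "kernel_measurable ((mild_op \<beta> \<theta> \<gamma> ^^ i) bot)"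
proof (induction i)
  case 0
  show ?case by (simp add: kernel_measurable_def)
next
  case (Suc i)
  then show ?case by (simp add: kernel_measurable_mild_op)
qed

lemma moment_kernel_eq_SUP: "moment_kernel \<beta> \<theta> \<gamma> = (SUP i. (mild_op \<beta> \<theta> \<gamma> ^^ i) bot)"
  unfolding moment_kernel_def
proof (rule lfp_eq_SUP_funpow_if_chain_continuous[where P = kernel_measurable])
  show "kernel_measurable bot"
    by (simp add: kernel_measurable_def)
qed (simp_all add: mono_mild_op kernel_measurable_mild_op mild_op_SUP)

lemma kernel_measurable_moment_kernel: "kernel_measurable (moment_kernel \<beta> \<theta> \<gamma>)"
proof -
  have [measurable]: "(\<lambda>t. (mild_op \<beta> \<theta> \<gamma> ^^ i) bot t k m) \<in> borel_measurable borel" for i k m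
    using kernel_measurable_iterates by (simp add: kernel_measurable_def)
  show ?thesis
    unfolding moment_kernel_eq_SUP kernel_measurable_def SUP_apply by measurable
qed

lemma moment_kernel_unfold: "moment_kernel \<beta> \<theta> \<gamma> = mild_op \<beta> \<theta> \<gamma> (moment_kernel \<beta> \<theta> \<gamma>)"
  unfolding moment_kernel_def by (rule lfp_unfold[OF mono_mild_op])

section \<open>The generator\<close>

lemma gfi_gen_cong:
  assumes "\<And>k. 1 \<le> k \<Longrightarrow> k \<le> n + 1 \<Longrightarrow> f k = g k"
  shows "gfi_gen \<beta> \<theta> \<gamma> f n = gfi_gen \<beta> \<theta> \<gamma> g n"
proof (cases "n = 0")
  case False
  then have "(\<Sum>j = 1..n - 1. \<gamma> * real n / (real j * (real j + 1)) * (f j + f (n - j) - f n))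
      = (\<Sum>j = 1..n - 1. \<gamma> * real n / (real j * (real j + 1)) * (g j + g (n - j) - g n))"
    by (intro sum.cong) (auto simp: assms)
  with False show ?thesis
    by (simp add: gfi_gen_def assms)
qed (simp add: gfi_gen_def)

lemma gfi_gen_add: "gfi_gen \<beta> \<theta> \<gamma> (\<lambda>m. f m + g m) n = gfi_gen \<beta> \<theta> \<gamma> f n + gfi_gen \<beta> \<theta> \<gamma> g n"
proof -
  have "(\<Sum>j = 1..n - 1. w j * ((f j + g j) + (f (n - j) + g (n - j)) - (f n + g n)))
      = (\<Sum>j = 1..n - 1. w j * (f j + f (n - j) - f n)) + (\<Sum>j = 1..n - 1. w j * (g j + g (n - j) - g n))"
    for w :: "nat \<Rightarrow> real"
    by (simp add: sum.distrib[symmetric] algebra_simps)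
  from this[of "\<lambda>j. \<gamma> * real n / (real j * (real j + 1))"] show ?thesis
    unfolding gfi_gen_def by (simp add: algebra_simps)
qed

lemma gfi_gen_cmult: "gfi_gen \<beta> \<theta> \<gamma> (\<lambda>m. c * f m) n = c * gfi_gen \<beta> \<theta> \<gamma> f n"
proof -
  have "(\<Sum>j = 1..n - 1. w j * (c * f j + c * f (n - j) - c * f n))
      = c * (\<Sum>j = 1..n - 1. w j * (f j + f (n - j) - f n))" for w :: "nat \<Rightarrow> real"
    by (simp add: sum_distrib_left algebra_simps)
  from this[of "\<lambda>j. \<gamma> * real n / (real j * (real j + 1))"] show ?thesis
    unfolding gfi_gen_def by (simp add: algebra_simps)
qed

lemma gfi_gen_linear:
  assumes "finite A"
  shows "gfi_gen \<beta> \<theta> \<gamma> (\<lambda>m. \<Sum>k\<in>A. c k * F k m) n = (\<Sum>k\<in>A. c k * gfi_gen \<beta> \<theta> \<gamma> (F k) n)"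
  using assms
  by (induction A rule: finite_induct) (simp_all add: gfi_gen_add gfi_gen_cmult, simp add: gfi_gen_def)

lemma gfi_gen_eq_sum_gen_entry:
  "gfi_gen \<beta> \<theta> \<gamma> h n = (\<Sum>k = 1..n + 1. h k * gen_entry \<beta> \<theta> \<gamma> n k)"
proof -
  have "gfi_gen \<beta> \<theta> \<gamma> h n = gfi_gen \<beta> \<theta> \<gamma> (\<lambda>m. \<Sum>k = 1..n + 1. h k * (if m = k then 1 else 0)) n"
    by (rule gfi_gen_cong) (simp add: if_distrib cong: if_cong)
  also have "\<dots> = (\<Sum>k = 1..n + 1. h k * gfi_gen \<beta> \<theta> \<gamma> (\<lambda>m. if m = k then 1 else 0) n)"
    by (rule gfi_gen_linear) simp
  finally show ?thesis
    by (simp add: gen_entry_def)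
qed

lemma gen_entry_nonneg:
  assumes "0 < \<beta>" "0 < \<gamma>" and "k \<noteq> n"
  shows "0 \<le> gen_entry \<beta> \<theta> \<gamma> n k"
  unfolding gen_entry_def gfi_gen_def using assms
  by (intro add_nonneg_nonneg sum_nonneg mult_nonneg_nonneg) auto

lemma gen_entry_diag_neg:
  assumes "0 < \<beta>" "0 < \<theta>" "0 < \<gamma>" and "1 \<le> n"
  shows "gen_entry \<beta> \<theta> \<gamma> n n < 0"
proof -
  have "(\<Sum>j = 1..n - 1. \<gamma> * real n / (real j * (real j + 1)) *
     ((if j = n then 1 else 0) + (if n - j = n then 1 else 0) - 1)) \<le> 0"
    using assms by (intro sum_nonpos) auto
  moreover have "0 < \<beta> * real n" "0 < \<theta> * real n"
    using assms by auto
  ultimately show ?thesis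
    by (simp add: gen_entry_def gfi_gen_def)
qed

lemma gen_entry_eq_0:
  assumes "n + 1 < k"
  shows "gen_entry \<beta> \<theta> \<gamma> n k = 0"
  using assms by (simp add: gen_entry_def gfi_gen_def) (intro sum.neutral, auto)

section \<open>Invariant functions are harmonic\<close>

lemma suminf_ennreal_swap:
  fixes f :: "nat \<Rightarrow> nat \<Rightarrow> ennreal"
  shows "(\<Sum>m. \<Sum>k. f k m) = (\<Sum>k. \<Sum>m. f k m)"
proof -
  have "(\<Sum>k. \<Sum>m. f k m) = (\<integral>\<^sup>+ k. (\<Sum>m. f k m) \<partial>count_space UNIV)"
    by (simp add: nn_integral_count_space_nat)
  also have "\<dots> = (\<Sum>m. \<integral>\<^sup>+ k. f k m \<partial>count_space UNIV)"
    by (rule nn_integral_suminf) simp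
  finally show ?thesis
    by (simp add: nn_integral_count_space_nat)
qed

lemma nn_integral_exp_interval:
  fixes d t :: real
  assumes "d \<noteq> 0" and "0 \<le> t"
  shows "(\<integral>\<^sup>+ s\<in>{0..t}. ennreal (exp (d * s)) \<partial>lborel) = ennreal ((exp (d * t) - 1) / d)"
proof -
  have "((\<lambda>s. exp (d * s)) has_integral (exp (d * t) / d - exp (d * 0) / d)) {0..t}"
  proof (rule fundamental_theorem_of_calculus)
    fix x :: real
    have "((\<lambda>s. exp (d * s) / d) has_real_derivative exp (d * x) * d / d) (at x within {0..t})"
      using assms by (intro derivative_eq_intros) auto
    then show "((\<lambda>s. exp (d * s) / d) has_vector_derivative exp (d * x)) (at x within {0..t})"
      using assms by (simp add: has_real_derivative_iff_has_vector_derivative)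
  qed (use assms in simp)
  then show ?thesis
    by (intro nn_integral_has_integral_lebesgue') (auto simp: diff_divide_distrib)
qed

lemma moment_sg_backward:
  assumes "1 \<le> n"
  shows "moment_sg \<beta> \<theta> \<gamma> t f n = ennreal (exp (gen_entry \<beta> \<theta> \<gamma> n n * t)) * ennreal (f n)
    + (\<integral>\<^sup>+ s\<in>{0..t}. ennreal (exp (gen_entry \<beta> \<theta> \<gamma> n n * s)) *
        (\<Sum>k. if 1 \<le> k \<and> k \<noteq> n then ennreal (gen_entry \<beta> \<theta> \<gamma> n k) * moment_sg \<beta> \<theta> \<gamma> (t - s) f k else 0)
      \<partial>lborel)"
proof -
  define K where "K = moment_kernel \<beta> \<theta> \<gamma>"
  define E where "E s = ennreal (exp (gen_entry \<beta> \<theta> \<gamma> n n * s)) * indicator {0..t} s" for s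
  define Q where "Q s k m = (if 1 \<le> k \<and> k \<noteq> n then ennreal (gen_entry \<beta> \<theta> \<gamma> n k) * K (t - s) k m else 0)"
    for s k m
  define F where "F m = (if 1 \<le> m then ennreal (f m) else 0)" for m
  have [measurable]: "(\<lambda>t. K t k m) \<in> borel_measurable borel" for k m
    using kernel_measurable_moment_kernel by (simp add: K_def kernel_measurable_def)
  have K_unfold: "K t n m = ennreal (if n = m then exp (gen_entry \<beta> \<theta> \<gamma> n n * t) else 0)
      + (\<integral>\<^sup>+ s. E s * (\<Sum>k. Q s k m) \<partial>lborel)" for m
  proof -
    have "K t n m = mild_op \<beta> \<theta> \<gamma> K t n m"
      unfolding K_def by (subst moment_kernel_unfold) (rule refl)
    then show ?thesis
      by (simp add: mild_op_def E_def Q_def mult_ac)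
  qed
  have integrand_measurable: "(\<lambda>s. E s * (\<Sum>k. Q s k m)) \<in> borel_measurable lborel" for m
    unfolding E_def Q_def by measurable
  have "moment_sg \<beta> \<theta> \<gamma> t f n = (\<Sum>m. ennreal (if n = m then exp (gen_entry \<beta> \<theta> \<gamma> n n * t) else 0) * F m)
      + (\<Sum>m. \<integral>\<^sup>+ s. E s * (\<Sum>k. Q s k m) * F m \<partial>lborel)"
    unfolding moment_sg_def K_def[symmetric] K_unfold F_def
    by (subst suminf_add)
       (auto intro!: arg_cong[where f = suminf] ext simp: distrib_right nn_integral_multc[OF integrand_measurable])
  also have "(\<Sum>m. ennreal (if n = m then exp (gen_entry \<beta> \<theta> \<gamma> n n * t) else 0) * F m)
      = ennreal (exp (gen_entry \<beta> \<theta> \<gamma> n n * t)) * ennreal (f n)"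
    using assms by (subst suminf_finite[of "{n}"]) (auto simp: F_def)
  also have "(\<Sum>m. \<integral>\<^sup>+ s. E s * (\<Sum>k. Q s k m) * F m \<partial>lborel)
      = (\<integral>\<^sup>+ s. E s * (\<Sum>k. \<Sum>m. Q s k m * F m) \<partial>lborel)"
    by (subst nn_integral_suminf[symmetric])
       (auto simp: E_def Q_def suminf_ennreal_swap[symmetric] mult.assoc intro!: nn_integral_cong)
  also have "(\<lambda>s. \<Sum>k. \<Sum>m. Q s k m * F m) = (\<lambda>s. \<Sum>k. if 1 \<le> k \<and> k \<noteq> n
      then ennreal (gen_entry \<beta> \<theta> \<gamma> n k) * moment_sg \<beta> \<theta> \<gamma> (t - s) f k else 0)"
    by (auto intro!: ext arg_cong[where f = suminf] arg_cong[where f = "(*) _"]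
        simp: Q_def F_def moment_sg_def K_def mult.assoc)
  finally show ?thesis
    by (simp add: E_def mult_ac)
qed

lemma invariant_backward_eq:
  assumes pos: "0 < \<beta>" "0 < \<theta>" "0 < \<gamma>"
    and nonneg: "\<And>k. 1 \<le> k \<Longrightarrow> 0 \<le> h k"
    and invariant: "\<And>t k. 0 \<le> t \<Longrightarrow> 1 \<le> k \<Longrightarrow> moment_sg \<beta> \<theta> \<gamma> t h k = ennreal (h k)"
    and n: "1 \<le> n"
  defines "d \<equiv> gen_entry \<beta> \<theta> \<gamma> n n"
    and "S \<equiv> \<Sum>k\<in>{1..n + 1} - {n}. gen_entry \<beta> \<theta> \<gamma> n k * h k"
  shows "h n = exp d * h n + (exp d - 1) / d * S"
proof -
  have "d < 0"
    using gen_entry_diag_neg[OF pos n] by (simp add: d_def)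
  have rate_nonneg: "0 \<le> gen_entry \<beta> \<theta> \<gamma> n k * h k" if "k \<in> {1..n + 1} - {n}" for k
    using that pos nonneg gen_entry_nonneg by auto
  then have "0 \<le> S"
    unfolding S_def by (rule sum_nonneg)
  have "0 \<le> (exp d - 1) / d"
    using \<open>d < 0\<close> by (simp add: divide_nonpos_neg)
  have jump_sum: "(\<Sum>k. if 1 \<le> k \<and> k \<noteq> n then ennreal (gen_entry \<beta> \<theta> \<gamma> n k) * moment_sg \<beta> \<theta> \<gamma> (1 - s) h k else 0)
      = ennreal S" if "s \<in> {0..1}" for s
  proof -
    have "(\<Sum>k. if 1 \<le> k \<and> k \<noteq> n then ennreal (gen_entry \<beta> \<theta> \<gamma> n k) * moment_sg \<beta> \<theta> \<gamma> (1 - s) h k else 0)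
        = (\<Sum>k\<in>{1..n + 1} - {n}. ennreal (gen_entry \<beta> \<theta> \<gamma> n k * h k))"
      using that pos nonneg
      by (subst suminf_finite[of "{1..n + 1} - {n}"])
         (auto simp: invariant gen_entry_eq_0 gen_entry_nonneg ennreal_mult intro!: sum.cong)
    also have "\<dots> = ennreal S"
      unfolding S_def using rate_nonneg by (rule sum_ennreal)
    finally show ?thesis .
  qed
  have "ennreal (h n) = moment_sg \<beta> \<theta> \<gamma> 1 h n"
    using invariant n by simp
  also have "\<dots> = ennreal (exp d) * ennreal (h n) + (\<integral>\<^sup>+ s\<in>{0..1}. ennreal (exp (d * s)) * ennreal S \<partial>lborel)"
    unfolding moment_sg_backward[OF n] d_def[symmetric]
    by (intro arg_cong2[where f = "(+)"] refl set_nn_integral_cong arg_cong2[where f = "(*)"] jump_sum) auto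
  also have "\<dots> = ennreal (exp d) * ennreal (h n) + (\<integral>\<^sup>+ s\<in>{0..1}. ennreal (exp (d * s)) \<partial>lborel) * ennreal S"
    by (subst nn_integral_multc[symmetric]) (simp_all add: mult_ac)
  also have "\<dots> = ennreal (exp d) * ennreal (h n) + ennreal ((exp d - 1) / d) * ennreal S"
    using \<open>d < 0\<close> by (simp add: nn_integral_exp_interval)
  also have "\<dots> = ennreal (exp d * h n + (exp d - 1) / d * S)"
    using \<open>0 \<le> (exp d - 1) / d\<close> \<open>0 \<le> S\<close> nonneg[OF n]
    by (metis ennreal_mult ennreal_plus exp_ge_zero mult_nonneg_nonneg)
  finally have "ennreal (h n) = ennreal (exp d * h n + (exp d - 1) / d * S)" .
  moreover have "0 \<le> exp d * h n + (exp d - 1) / d * S"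
    using \<open>0 \<le> (exp d - 1) / d\<close> \<open>0 \<le> S\<close> nonneg[OF n] by (intro add_nonneg_nonneg mult_nonneg_nonneg) simp_all
  ultimately show ?thesis
    using nonneg[OF n] by (subst (asm) ennreal_inj) auto
qed

lemma gfi_gen_eq_0_if_invariant:
  assumes pos: "0 < \<beta>" "0 < \<theta>" "0 < \<gamma>"
    and nonneg: "\<And>k. 1 \<le> k \<Longrightarrow> 0 \<le> h k"
    and invariant: "\<And>t k. 0 \<le> t \<Longrightarrow> 1 \<le> k \<Longrightarrow> moment_sg \<beta> \<theta> \<gamma> t h k = ennreal (h k)"
    and n: "1 \<le> n"
  shows "gfi_gen \<beta> \<theta> \<gamma> h n = 0"
proof -
  define d where "d = gen_entry \<beta> \<theta> \<gamma> n n"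
  define S where "S = (\<Sum>k\<in>{1..n + 1} - {n}. gen_entry \<beta> \<theta> \<gamma> n k * h k)"
  have "d < 0"
    using gen_entry_diag_neg[OF pos n] by (simp add: d_def)
  have "h n = exp d * h n + (exp d - 1) / d * S"
    unfolding d_def S_def by (rule invariant_backward_eq[OF pos nonneg invariant n])
  then have "d * h n = d * exp d * h n + (exp d - 1) * S"
    using \<open>d < 0\<close> by (simp add: field_simps)
  then have "exp d * (S + d * h n) = S + d * h n"
    by algebra
  then have "S = - d * h n"
    using \<open>d < 0\<close> by (simp add: mult_cancel_right2)
  moreover have "gfi_gen \<beta> \<theta> \<gamma> h n = d * h n + S"
    unfolding gfi_gen_eq_sum_gen_entry using n
    by (subst sum.remove[of _ n]) (auto simp: S_def d_def mult.commute)
  ultimately show ?thesis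
    by simp
qed

section \<open>Bounded harmonic functions are concave\<close>

definition split_weight :: "nat \<Rightarrow> real" where
  "split_weight j = 1 / (real j * (real j + 1))"

lemma split_weight_eq_diff: "1 \<le> j \<Longrightarrow> split_weight j = 1 / real j - 1 / real (Suc j)"
  by (simp add: split_weight_def diff_divide_eq_iff divide_eq_eq field_simps)

lemma sum_split_weight: "(\<Sum>j = 1..n. split_weight j) = real n / (real n + 1)"
proof -
  have "(\<Sum>j = 1..n. split_weight j) = (\<Sum>j = 1..n. (- 1 / real (Suc j)) - (- 1 / real j))"
    by (intro sum.cong) (auto simp: split_weight_eq_diff)
  also have "\<dots> = 1 - 1 / (real n + 1)"
    by (subst sum_Suc_diff) auto
  finally show ?thesis
    by (simp add: field_simps)
qed

lemma split_weight_Suc_le: "1 \<le> j \<Longrightarrow> split_weight (Suc j) \<le> split_weight j"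
  unfolding split_weight_def by (auto intro!: divide_left_mono mult_mono mult_pos_pos)

definition split_avg :: "(nat \<Rightarrow> real) \<Rightarrow> nat \<Rightarrow> real" where
  "split_avg c n = (\<Sum>j = 1..n. split_weight j * c (n - j)) + c n / (real n + 1)"

lemma split_avg_Suc_le:
  assumes "decseq c"
  shows "split_avg c (Suc n) \<le> split_avg c n"
proof -
  let ?w = split_weight
  let ?A = "\<Sum>j = 1..n. ?w (Suc j) * c (n - j)"
  have c_le: "c j \<le> c i" if "i \<le> j" for i j
    using assms that by (simp add: decseq_def)
  have "split_avg c (Suc n) = ?w 1 * c n + ?A + c (Suc n) / (real (Suc n) + 1)"
    by (simp add: split_avg_def sum.atLeast_Suc_atMost sum.shift_bounds_cl_Suc_ivl del: sum.cl_ivl_Suc)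
  also have "\<dots> \<le> ?A + (?w 1 - ?w (Suc n)) * c n + c n / (real n + 1)"
  proof -
    have "?w (Suc n) = 1 / (real n + 1) - 1 / (real (Suc n) + 1)"
      using split_weight_eq_diff[of "Suc n"] by simp
    then have "(?w 1 - ?w (Suc n)) * c n + c n / (real n + 1) = ?w 1 * c n + c n / (real (Suc n) + 1)"
      by (simp add: divide_inverse algebra_simps) (metis distrib_left)
    moreover have "c (Suc n) / (real (Suc n) + 1) \<le> c n / (real (Suc n) + 1)"
      using c_le[of n "Suc n"] by (simp add: divide_right_mono)
    ultimately show ?thesis
      by linarith
  qed
  also have "(?w 1 - ?w (Suc n)) * c n = (\<Sum>j = 1..n. (?w j - ?w (Suc j)) * c n)"
    using sum_Suc_diff[of 1 n "\<lambda>j. - ?w j"] by (simp add: sum_distrib_right[symmetric])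
  also have "\<dots> \<le> (\<Sum>j = 1..n. (?w j - ?w (Suc j)) * c (n - j))"
    by (intro sum_mono mult_left_mono c_le) (auto simp: split_weight_Suc_le)
  also have "?A + \<dots> + c n / (real n + 1) = split_avg c n"
    by (simp add: split_avg_def sum.distrib[symmetric] algebra_simps)
  finally show ?thesis
    by simp
qed

lemma split_avg_diff: "split_avg c n - split_avg c' n = split_avg (\<lambda>m. c m - c' m) n"
  by (simp add: split_avg_def sum_subtractf[symmetric] diff_divide_distrib algebra_simps)

lemma abs_split_avg_le:
  assumes "\<And>m. \<bar>c m\<bar> \<le> e"
  shows "\<bar>split_avg c n\<bar> \<le> e"
proof -
  have "\<bar>split_avg c n\<bar> \<le> (\<Sum>j = 1..n. split_weight j * \<bar>c (n - j)\<bar>) + \<bar>c n\<bar> / (real n + 1)"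
    unfolding split_avg_def
    by (rule order_trans[OF abs_triangle_ineq add_mono[OF order_trans[OF sum_abs]]])
       (simp_all add: abs_mult split_weight_def)
  also have "\<dots> \<le> (\<Sum>j = 1..n. split_weight j * e) + e / (real n + 1)"
    using assms
    by (intro add_mono sum_mono mult_left_mono divide_right_mono) (simp_all add: split_weight_def)
  also have "\<dots> = real n / (real n + 1) * e + e / (real n + 1)"
    by (simp only: sum_distrib_right[symmetric] sum_split_weight)
  also have "\<dots> = (real n + 1) * e / (real n + 1)"
    by (simp add: add_divide_distrib distrib_right)
  also have "\<dots> = e"
    by simp
  finally show ?thesis .
qed

text \<open>Differencing \<open>L h (n + 1) / (n + 1) = L h n / n = 0\<close> shows that the increments
  of an \<open>L\<close>-harmonic \<open>h\<close> with \<open>h 0 = 0\<close> are a fixed point of this map.\<close>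
definition incr_step :: "real \<Rightarrow> real \<Rightarrow> real \<Rightarrow> (nat \<Rightarrow> real) \<Rightarrow> nat \<Rightarrow> real" where
  "incr_step \<beta> \<theta> \<gamma> c n =
     (if n = 0 then c 0 else (\<beta> * c (Suc n) + \<gamma> * split_avg c n) / (\<theta> + \<beta> + \<gamma>))"

lemma decseq_incr_step:
  assumes "0 < \<beta>" "0 < \<theta>" "0 < \<gamma>" and "decseq c" and "0 \<le> c 0"
  shows "decseq (incr_step \<beta> \<theta> \<gamma> c)"
proof (rule decseq_SucI)
  fix n
  have c_le: "c j \<le> c i" if "i \<le> j" for i j
    using assms(4) that by (simp add: decseq_def)
  have avg_le: "split_avg c (Suc n) \<le> split_avg c n"
    using assms(4) by (rule split_avg_Suc_le)
  show "incr_step \<beta> \<theta> \<gamma> c (Suc n) \<le> incr_step \<beta> \<theta> \<gamma> c n"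
  proof (cases "n = 0")
    case True
    have "\<beta> * c 2 \<le> \<beta> * c 0"
      using assms c_le[of 0 2] by simp
    moreover have "\<gamma> * split_avg c 1 \<le> \<gamma> * c 0"
      using assms avg_le True by (simp add: split_avg_def)
    moreover have "0 \<le> \<theta> * c 0"
      using assms by simp
    ultimately have "\<beta> * c 2 + \<gamma> * split_avg c 1 \<le> (\<theta> + \<beta> + \<gamma>) * c 0"
      by (simp add: distrib_right)
    with True assms show ?thesis
      by (simp add: incr_step_def numeral_2_eq_2 pos_divide_le_eq mult.commute)
  next
    case False
    have "\<beta> * c (Suc (Suc n)) + \<gamma> * split_avg c (Suc n) \<le> \<beta> * c (Suc n) + \<gamma> * split_avg c n"
      using assms c_le[of "Suc n" "Suc (Suc n)"] avg_le by (intro add_mono mult_left_mono) simp_all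
    with False assms show ?thesis
      by (simp add: incr_step_def divide_right_mono)
  qed
qed

lemma abs_incr_step_diff_le:
  assumes "0 < \<beta>" "0 < \<theta>" "0 < \<gamma>" and "c 0 = c' 0" and "\<And>m. \<bar>c m - c' m\<bar> \<le> e"
  shows "\<bar>incr_step \<beta> \<theta> \<gamma> c n - incr_step \<beta> \<theta> \<gamma> c' n\<bar> \<le> (\<beta> + \<gamma>) / (\<theta> + \<beta> + \<gamma>) * e"
proof (cases "n = 0")
  case True
  have "0 \<le> e"
    using assms(5)[of 0] by simp
  with True assms show ?thesis
    by (simp add: incr_step_def)
next
  case False
  have "\<bar>\<beta> * (c (Suc n) - c' (Suc n)) + \<gamma> * split_avg (\<lambda>m. c m - c' m) n\<bar> \<le> \<beta> * e + \<gamma> * e"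
    using assms abs_split_avg_le[of "\<lambda>m. c m - c' m" e n]
    by (intro order_trans[OF abs_triangle_ineq add_mono]) (simp_all add: abs_mult mult_left_mono)
  then have "\<bar>\<beta> * c (Suc n) + \<gamma> * split_avg c n - (\<beta> * c' (Suc n) + \<gamma> * split_avg c' n)\<bar> \<le> (\<beta> + \<gamma>) * e"
    by (simp add: split_avg_diff[symmetric] algebra_simps)
  with False assms show ?thesis
    by (simp add: incr_step_def diff_divide_distrib[symmetric] abs_div divide_right_mono)
qed

lemma decseq_if_incr_step_fixpoint:
  assumes pos: "0 < \<beta>" "0 < \<theta>" "0 < \<gamma>"
    and fixpoint: "incr_step \<beta> \<theta> \<gamma> D = D"
    and bounded: "\<And>m. \<bar>D m\<bar> \<le> B" and "0 \<le> D 0"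
  shows "decseq D"
proof -
  define \<kappa> where "\<kappa> = (\<beta> + \<gamma>) / (\<theta> + \<beta> + \<gamma>)"
  define c where "c k = (incr_step \<beta> \<theta> \<gamma> ^^ k) (\<lambda>_. D 0)" for k
  have c_0: "c k 0 = D 0" for k
    by (induction k) (simp_all add: c_def incr_step_def)
  have decseq_c: "decseq (c k)" for k
  proof (induction k)
    case 0
    show ?case by (simp add: c_def decseq_def)
  next
    case (Suc k)
    have "0 \<le> c k 0"
      using c_0 \<open>0 \<le> D 0\<close> by simp
    from decseq_incr_step[OF pos Suc this] show ?case
      by (simp add: c_def)
  qed
  have dist: "\<bar>D i - c k i\<bar> \<le> \<kappa> ^ k * (2 * B)" for k i
  proof (induction k arbitrary: i)
    case 0
    show ?case
      using bounded[of i] bounded[of 0] by (simp add: c_def)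
  next
    case (Suc k)
    have "\<bar>incr_step \<beta> \<theta> \<gamma> D i - incr_step \<beta> \<theta> \<gamma> (c k) i\<bar> \<le> \<kappa> * (\<kappa> ^ k * (2 * B))"
      using abs_incr_step_diff_le[where c = D and c' = "c k" and n = i, OF pos c_0[of k, symmetric] Suc.IH]
      unfolding \<kappa>_def .
    then show ?case
      by (simp add: fixpoint c_def mult.assoc)
  qed
  have "0 \<le> \<kappa>" "\<kappa> < 1"
    using pos by (simp_all add: \<kappa>_def)
  then have bound_lim: "(\<lambda>k. \<kappa> ^ k * (2 * B)) \<longlonglongrightarrow> 0"
    by (intro tendsto_mult_left_zero LIMSEQ_power_zero) simp
  have c_lim: "(\<lambda>k. c k i) \<longlonglongrightarrow> D i" for i
    using Lim_null_comparison[of "\<lambda>k. c k i - D i" "\<lambda>k. \<kappa> ^ k * (2 * B)"] dist bound_lim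
    by (simp add: LIM_zero_iff abs_minus_commute)
  show ?thesis
  proof (rule decseq_SucI)
    fix i
    show "D (Suc i) \<le> D i"
      by (rule LIMSEQ_le[OF c_lim c_lim]) (use decseq_c in \<open>auto simp: decseq_Suc_iff\<close>)
  qed
qed

lemma incr_step_increments_eq:
  assumes "h 0 = 0" and harmonic: "\<And>n. 1 \<le> n \<Longrightarrow> gfi_gen \<beta> \<theta> \<gamma> h n = 0"
    and pos: "0 < \<beta>" "0 < \<theta>" "0 < \<gamma>"
  shows "incr_step \<beta> \<theta> \<gamma> (\<lambda>k. h (Suc k) - h k) = (\<lambda>k. h (Suc k) - h k)"
proof
  fix n
  define D where "D k = h (Suc k) - h k" for k
  define T where "T n = (\<Sum>j = 1..n. split_weight j * (h j + h (n - j) - h n))" for n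
  define G where "G n = \<beta> * (h (Suc n) - h n) - \<theta> * h n + \<gamma> * T n" for n
  have G_0: "G n = 0" if "1 \<le> n" for n
  proof -
    have "T n = (\<Sum>j = 1..n - 1. split_weight j * (h j + h (n - j) - h n))"
      using that \<open>h 0 = 0\<close> by (cases n) (simp_all add: T_def)
    then have "gfi_gen \<beta> \<theta> \<gamma> h n = real n * G n"
      by (simp add: gfi_gen_def G_def split_weight_def sum_distrib_left algebra_simps)
    then show ?thesis
      using harmonic[OF that] that by simp
  qed
  have "T (Suc n) = (\<Sum>j = 1..n. split_weight j * (h j + h (Suc (n - j)) - h (Suc n)))"
    using \<open>h 0 = 0\<close> by (auto simp: T_def Suc_diff_le intro!: sum.cong)
  then have "T (Suc n) - T n = (\<Sum>j = 1..n. split_weight j * (D (n - j) - D n))"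
    unfolding T_def D_def by (simp add: sum_subtractf[symmetric] algebra_simps)
  also have "\<dots> = (\<Sum>j = 1..n. split_weight j * D (n - j)) - (\<Sum>j = 1..n. split_weight j) * D n"
    by (simp add: right_diff_distrib sum_subtractf sum_distrib_right)
  also have "\<dots> = split_avg D n - D n"
    unfolding sum_split_weight split_avg_def by (simp add: field_simps)
  finally have T_diff: "T (Suc n) - T n = split_avg D n - D n" .
  have "G (Suc n) - G n = \<beta> * (D (Suc n) - D n) - \<theta> * D n + \<gamma> * (T (Suc n) - T n)"
    by (simp add: G_def D_def algebra_simps)
  also have "\<dots> = \<beta> * D (Suc n) + \<gamma> * split_avg D n - (\<theta> + \<beta> + \<gamma>) * D n"
    unfolding T_diff by (simp add: algebra_simps)
  finally show "incr_step \<beta> \<theta> \<gamma> D n = D n"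
    using G_0[of n] G_0[of "Suc n"] pos by (cases "n = 0") (simp_all add: incr_step_def field_simps)
qed

lemma subadditive_if_decseq_increments:
  fixes h :: "nat \<Rightarrow> 'a::ordered_ab_group_add"
  assumes "decseq (\<lambda>k. h (Suc k) - h k)"
  shows "h (m + n) + h 0 \<le> h m + h n"
proof -
  have "h (m + n) - h m = (\<Sum>i<n. h (Suc (m + i)) - h (m + i))"
    using sum_lessThan_telescope[of "\<lambda>i. h (m + i)" n] by simp
  also have "\<dots> \<le> (\<Sum>i<n. h (Suc i) - h i)"
    using assms by (intro sum_mono) (simp add: decseq_def)
  also have "\<dots> = h n - h 0"
    by (rule sum_lessThan_telescope)
  finally show ?thesis
    by (simp add: algebra_simps)
qed

lemma subadditive_if_bounded_harmonic:
  assumes pos: "0 < \<beta>" "0 < \<theta>" "0 < \<gamma>"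
    and harmonic: "\<And>k. 1 \<le> k \<Longrightarrow> gfi_gen \<beta> \<theta> \<gamma> h k = 0"
    and bounded: "\<And>k. 1 \<le> k \<Longrightarrow> \<bar>h k\<bar> \<le> C" and "0 \<le> h 1"
    and "1 \<le> m" "1 \<le> n"
  shows "h (m + n) \<le> h m + h n"
proof -
  define h\<^sub>0 where "h\<^sub>0 = h(0 := 0)"
  have harmonic\<^sub>0: "gfi_gen \<beta> \<theta> \<gamma> h\<^sub>0 k = 0" if "1 \<le> k" for k
    using harmonic[OF that] gfi_gen_cong[of k h\<^sub>0 h] by (simp add: h\<^sub>0_def)
  have fixpoint: "incr_step \<beta> \<theta> \<gamma> (\<lambda>k. h\<^sub>0 (Suc k) - h\<^sub>0 k) = (\<lambda>k. h\<^sub>0 (Suc k) - h\<^sub>0 k)"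
    by (rule incr_step_increments_eq[OF _ harmonic\<^sub>0 pos]) (simp add: h\<^sub>0_def)
  have "\<bar>h\<^sub>0 (Suc k) - h\<^sub>0 k\<bar> \<le> 2 * C" for k
    using bounded[of k] bounded[of "Suc k"] by (cases k) (simp_all add: h\<^sub>0_def)
  with fixpoint have "decseq (\<lambda>k. h\<^sub>0 (Suc k) - h\<^sub>0 k)"
    by (rule decseq_if_incr_step_fixpoint[OF pos]) (use \<open>0 \<le> h 1\<close> in \<open>simp add: h\<^sub>0_def\<close>)
  then have "h\<^sub>0 (m + n) + h\<^sub>0 0 \<le> h\<^sub>0 m + h\<^sub>0 n"
    by (rule subadditive_if_decseq_increments)
  with \<open>1 \<le> m\<close> \<open>1 \<le> n\<close> show ?thesis
    by (simp add: h\<^sub>0_def)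
qed

theorem lemma6p4:
  fixes \<beta> \<theta> \<gamma> :: real and h \<pi> :: "nat \<Rightarrow> real"
  assumes "0 < \<beta>" and "0 < \<theta>" and "0 < \<gamma>"
    and "perron_triple \<beta> \<theta> \<gamma> 0 h \<pi>"
  shows "\<forall>m n. 1 \<le> m \<longrightarrow> 1 \<le> n \<longrightarrow> h (m + n) \<le> h m + h n"
proof -
  have h_pos: "\<And>k. 1 \<le> k \<Longrightarrow> 0 < h k"
    and invariant: "\<And>t k. 0 \<le> t \<Longrightarrow> 1 \<le> k \<Longrightarrow> moment_sg \<beta> \<theta> \<gamma> t h k = ennreal (h k)"
    using \<open>perron_triple \<beta> \<theta> \<gamma> 0 h \<pi>\<close> by (simp_all add: perron_triple_def)
  have "\<exists>c C. 0 < c \<and> (\<forall>k\<ge>1. c \<le> h k \<and> h k \<le> C)"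
    using \<open>perron_triple \<beta> \<theta> \<gamma> 0 h \<pi>\<close> by (simp add: perron_triple_def)
  then obtain C where "\<And>k. 1 \<le> k \<Longrightarrow> \<bar>h k\<bar> \<le> C"
    using h_pos by (metis abs_of_pos)
  moreover have "gfi_gen \<beta> \<theta> \<gamma> h k = 0" if "1 \<le> k" for k
    using h_pos by (intro gfi_gen_eq_0_if_invariant[OF assms(1-3) _ invariant that]) (simp add: less_imp_le)
  ultimately show ?thesis
    using h_pos[of 1] by (blast intro: subadditive_if_bounded_harmonic[OF assms(1-3)] less_imp_le)
qed

end
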